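(* Let $f\in R=D[t;\sigma,\delta]$ be monic of degree $m\ge 2$. Then $f$ is right semi-invariant if and only if $D\subseteq \mathrm{Nuc}_r(S_f)$. In particular, if $f$ is right semi-invariant, then either $\mathrm{Nuc}(S_f)=D$ or $S_f$ is associative.
   Context: $D$ is an associative division ring with center $F$, $\sigma$ is a ring endomorphism of $D$ and $\delta$ is a left $\sigma$-derivation of $D$ (additive with $\delta(ab)=\sigma(a)\delta(b)+\delta(a)b$). $R=D[t;\sigma,\delta]$ is the skew polynomial ring of polynomials $\sum a_it^i$, $a_i\in D$, with multiplication determined by $ta=\sigma(a)t+\delta(a)$. For monic $f$ of degree $m$, every $g\in R$ can be written uniquely as $g=qf+r$ with $\deg r<m$; write $r=g\ \mathrm{mod}_r f$. The Petit algebra $S_f$ is the set of elements of $R$ of degree $<m$ with multiplication $g\circ h=gh\ \mathrm{mod}_r f$; it is a unital nonassociative ring. For a ring $A$ with associator $[x,y,z]=(xy)z-x(yz)$: $\mathrm{Nuc}_l(A)=\{x:[x,A,A]=0\}$, $\mathrm{Nuc}_m(A)=\{x:[A,x,A]=0\}$, $\mathrm{Nuc}_r(A)=\{x:[A,A,x]=0\}$, and $\mathrm{Nuc}(A)$ is their intersection. $D$ is viewed inside $S_f$ as the polynomials of degree $0$. $f$ is called right semi-invariant if $fD\subseteq Df$, i.e. for every $a\in D$ there is $b\in D$ with $f(t)a=bf(t)$. *)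

theory Defs
  imports Main
begin

text \<open>Skew polynomials over a division ring 'a are represented by their coefficient
  functions nat \<Rightarrow> 'a (coefficient of t^i) with finite support.\<close>

definition finsupp :: "(nat \<Rightarrow> 'a::zero) \<Rightarrow> bool" where
  "finsupp p \<longleftrightarrow> finite {i. p i \<noteq> 0}"

definition deg_less :: "(nat \<Rightarrow> 'a::zero) \<Rightarrow> nat \<Rightarrow> bool" where
  "deg_less p m \<longleftrightarrow> (\<forall>i\<ge>m. p i = 0)"

definition monic_deg :: "(nat \<Rightarrow> 'a::{zero,one}) \<Rightarrow> nat \<Rightarrow> bool" where
  "monic_deg f m \<longleftrightarrow> f m = 1 \<and> (\<forall>i>m. f i = 0)"

definition ring_endo :: "('a::ring_1 \<Rightarrow> 'a) \<Rightarrow> bool" where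
  "ring_endo \<sigma> \<longleftrightarrow> (\<forall>a b. \<sigma> (a + b) = \<sigma> a + \<sigma> b) \<and> (\<forall>a b. \<sigma> (a * b) = \<sigma> a * \<sigma> b) \<and> \<sigma> 1 = 1"

definition left_sigma_derivation :: "('a::ring_1 \<Rightarrow> 'a) \<Rightarrow> ('a \<Rightarrow> 'a) \<Rightarrow> bool" where
  "left_sigma_derivation \<sigma> \<delta> \<longleftrightarrow> (\<forall>a b. \<delta> (a + b) = \<delta> a + \<delta> b) \<and>
     (\<forall>a b. \<delta> (a * b) = \<sigma> a * \<delta> b + \<delta> a * b)"

definition sconst :: "'a::zero \<Rightarrow> nat \<Rightarrow> 'a" where
  "sconst a = (\<lambda>k. if k = 0 then a else 0)"

text \<open>left multiplication by t, using t a = sigma(a) t + delta(a)\<close>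
definition tmul :: "('a::ring_1 \<Rightarrow> 'a) \<Rightarrow> ('a \<Rightarrow> 'a) \<Rightarrow> (nat \<Rightarrow> 'a) \<Rightarrow> nat \<Rightarrow> 'a" where
  "tmul \<sigma> \<delta> p = (\<lambda>k. (if k = 0 then 0 else \<sigma> (p (k - 1))) + \<delta> (p k))"

text \<open>product in D[t;sigma,delta]: (sum a_i t^i) q = sum a_i (t^i q)\<close>
definition skmult :: "('a::ring_1 \<Rightarrow> 'a) \<Rightarrow> ('a \<Rightarrow> 'a) \<Rightarrow> (nat \<Rightarrow> 'a) \<Rightarrow> (nat \<Rightarrow> 'a) \<Rightarrow> nat \<Rightarrow> 'a" where
  "skmult \<sigma> \<delta> p q = (\<lambda>k. \<Sum>i\<in>{i. p i \<noteq> 0}. p i * ((tmul \<sigma> \<delta> ^^ i) q) k)"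

definition rmod :: "('a::ring_1 \<Rightarrow> 'a) \<Rightarrow> ('a \<Rightarrow> 'a) \<Rightarrow> (nat \<Rightarrow> 'a) \<Rightarrow> nat \<Rightarrow> (nat \<Rightarrow> 'a) \<Rightarrow> nat \<Rightarrow> 'a" where
  "rmod \<sigma> \<delta> f m g = (THE r. deg_less r m \<and>
      (\<exists>q. finsupp q \<and> g = (\<lambda>k. skmult \<sigma> \<delta> q f k + r k)))"

definition petit_carrier :: "nat \<Rightarrow> (nat \<Rightarrow> 'a::zero) set" where
  "petit_carrier m = {p. deg_less p m}"

definition pmult :: "('a::ring_1 \<Rightarrow> 'a) \<Rightarrow> ('a \<Rightarrow> 'a) \<Rightarrow> (nat \<Rightarrow> 'a) \<Rightarrow> nat \<Rightarrow> (nat \<Rightarrow> 'a) \<Rightarrow> (nat \<Rightarrow> 'a) \<Rightarrow> nat \<Rightarrow> 'a" where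
  "pmult \<sigma> \<delta> f m g h = rmod \<sigma> \<delta> f m (skmult \<sigma> \<delta> g h)"

definition passoc :: "('a::ring_1 \<Rightarrow> 'a) \<Rightarrow> ('a \<Rightarrow> 'a) \<Rightarrow> (nat \<Rightarrow> 'a) \<Rightarrow> nat \<Rightarrow> (nat \<Rightarrow> 'a) \<Rightarrow> (nat \<Rightarrow> 'a) \<Rightarrow> (nat \<Rightarrow> 'a) \<Rightarrow> nat \<Rightarrow> 'a" where
  "passoc \<sigma> \<delta> f m x y z = (\<lambda>k. pmult \<sigma> \<delta> f m (pmult \<sigma> \<delta> f m x y) z k - pmult \<sigma> \<delta> f m x (pmult \<sigma> \<delta> f m y z) k)"

definition nuc_l :: "('a::ring_1 \<Rightarrow> 'a) \<Rightarrow> ('a \<Rightarrow> 'a) \<Rightarrow> (nat \<Rightarrow> 'a) \<Rightarrow> nat \<Rightarrow> (nat \<Rightarrow> 'a) set" where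
  "nuc_l \<sigma> \<delta> f m = {x \<in> petit_carrier m. \<forall>y\<in>petit_carrier m. \<forall>z\<in>petit_carrier m. passoc \<sigma> \<delta> f m x y z = (\<lambda>k. 0)}"

definition nuc_m :: "('a::ring_1 \<Rightarrow> 'a) \<Rightarrow> ('a \<Rightarrow> 'a) \<Rightarrow> (nat \<Rightarrow> 'a) \<Rightarrow> nat \<Rightarrow> (nat \<Rightarrow> 'a) set" where
  "nuc_m \<sigma> \<delta> f m = {x \<in> petit_carrier m. \<forall>y\<in>petit_carrier m. \<forall>z\<in>petit_carrier m. passoc \<sigma> \<delta> f m y x z = (\<lambda>k. 0)}"

definition nuc_r :: "('a::ring_1 \<Rightarrow> 'a) \<Rightarrow> ('a \<Rightarrow> 'a) \<Rightarrow> (nat \<Rightarrow> 'a) \<Rightarrow> nat \<Rightarrow> (nat \<Rightarrow> 'a) set" where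
  "nuc_r \<sigma> \<delta> f m = {x \<in> petit_carrier m. \<forall>y\<in>petit_carrier m. \<forall>z\<in>petit_carrier m. passoc \<sigma> \<delta> f m y z x = (\<lambda>k. 0)}"

definition nuc :: "('a::ring_1 \<Rightarrow> 'a) \<Rightarrow> ('a \<Rightarrow> 'a) \<Rightarrow> (nat \<Rightarrow> 'a) \<Rightarrow> nat \<Rightarrow> (nat \<Rightarrow> 'a) set" where
  "nuc \<sigma> \<delta> f m = nuc_l \<sigma> \<delta> f m \<inter> nuc_m \<sigma> \<delta> f m \<inter> nuc_r \<sigma> \<delta> f m"

definition petit_associative :: "('a::ring_1 \<Rightarrow> 'a) \<Rightarrow> ('a \<Rightarrow> 'a) \<Rightarrow> (nat \<Rightarrow> 'a) \<Rightarrow> nat \<Rightarrow> bool" where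
  "petit_associative \<sigma> \<delta> f m \<longleftrightarrow> (\<forall>x\<in>petit_carrier m. \<forall>y\<in>petit_carrier m. \<forall>z\<in>petit_carrier m. passoc \<sigma> \<delta> f m x y z = (\<lambda>k. 0))"

definition right_semi_invariant :: "('a::ring_1 \<Rightarrow> 'a) \<Rightarrow> ('a \<Rightarrow> 'a) \<Rightarrow> (nat \<Rightarrow> 'a) \<Rightarrow> bool" where
  "right_semi_invariant \<sigma> \<delta> f \<longleftrightarrow> (\<forall>a. \<exists>b. skmult \<sigma> \<delta> f (sconst a) = skmult \<sigma> \<delta> (sconst b) f)"

end

theory Submission imports Defs begin

(* Write a product in R as x y = Q f + x \<circ> y. Then the associator of S_f is
   [x, y, z] = - (Q (f z) mod_r f), because Q f z and x (y z) - x (y \<circ> z) lie in R f.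
   Consequently z lies in Nuc_r(S_f) iff f z \<in> R f: for the converse take x = t^(m-1), y = t,
   where Q = 1 (this needs m \<ge> 2). For a constant a, f a has degree m, so f a \<in> R f
   iff f a \<in> D f, which is the first claim. Constants lie in the left and middle nuclei
   since their products with elements of S_f stay below degree m. Finally, if x \<in> Nuc_l(S_f)
   has degree d \<ge> 1 and leading coefficient c, then x t^(m-d) = c f + r with deg r < m, so
   0 = [x, t^(m-d), z] = - c (f z mod_r f) for all z: every z is in Nuc_r(S_f), i.e. S_f is
   associative. *)

definition smonom :: "nat \<Rightarrow> nat \<Rightarrow> 'a::zero_neq_one" where
  "smonom j = (\<lambda>k. if k = j then 1 else 0)"

lemma deg_lessD: "deg_less p N \<Longrightarrow> N \<le> i \<Longrightarrow> p i = 0"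
  unfolding deg_less_def by blast

lemma deg_less_mono: "deg_less p N \<Longrightarrow> N \<le> M \<Longrightarrow> deg_less p M"
  unfolding deg_less_def by auto

lemma finsupp_iff_deg_less: "finsupp p \<longleftrightarrow> (\<exists>N. deg_less p N)"
proof
  assume "finsupp p"
  then obtain N where "{i. p i \<noteq> 0} \<subseteq> {..<N}"
    unfolding finsupp_def by (auto simp: finite_nat_set_iff_bounded)
  then have "deg_less p N" unfolding deg_less_def by force
  then show "\<exists>N. deg_less p N" ..
next
  assume "\<exists>N. deg_less p N"
  then obtain N where "deg_less p N" ..
  then have "{i. p i \<noteq> 0} \<subseteq> {..<N}" unfolding deg_less_def by (auto simp: not_less[symmetric])
  then show "finsupp p" unfolding finsupp_def using finite_subset by blast
qed

lemma finsupp_if_deg_less: "deg_less p N \<Longrightarrow> finsupp p"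
  using finsupp_iff_deg_less by blast

lemma obtain_common_deg_bound:
  assumes "finsupp p" "finsupp q"
  obtains N where "deg_less p N" "deg_less q N"
proof -
  obtain N1 where "deg_less p N1" using assms(1) finsupp_iff_deg_less by blast
  moreover obtain N2 where "deg_less q N2" using assms(2) finsupp_iff_deg_less by blast
  ultimately show ?thesis using that[of "max N1 N2"] deg_less_mono by (metis max.cobounded1 max.cobounded2)
qed

lemma obtain_degree:
  assumes "finsupp p" "\<not> deg_less p N"
  obtains d where "N \<le> d" "p d \<noteq> 0" "deg_less p (Suc d)"
proof -
  define S where "S = {i. N \<le> i \<and> p i \<noteq> 0}"
  have "finite S" using assms(1) unfolding finsupp_def S_def by (rule rev_finite_subset) auto
  moreover have "S \<noteq> {}" using assms(2) unfolding S_def deg_less_def by auto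
  ultimately have "Max S \<in> S" "\<forall>i\<in>S. i \<le> Max S" by auto
  moreover have "deg_less p (Suc (Max S))"
    unfolding deg_less_def
  proof (intro allI impI)
    fix i assume i: "Suc (Max S) \<le> i"
    then have "i \<notin> S" using \<open>\<forall>i\<in>S. i \<le> Max S\<close> by auto
    moreover have "N \<le> i" using \<open>Max S \<in> S\<close> i unfolding S_def by simp
    ultimately show "p i = 0" unfolding S_def by simp
  qed
  ultimately show ?thesis using that unfolding S_def by blast
qed

lemma deg_less_add:
  "deg_less (p::nat \<Rightarrow> 'a::monoid_add) N \<Longrightarrow> deg_less q N \<Longrightarrow> deg_less (\<lambda>k. p k + q k) N"
  unfolding deg_less_def by auto

lemma deg_less_diff:
  "deg_less (p::nat \<Rightarrow> 'a::group_add) N \<Longrightarrow> deg_less q N \<Longrightarrow> deg_less (\<lambda>k. p k - q k) N"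
  unfolding deg_less_def by auto

lemma deg_less_mult_left: "deg_less p N \<Longrightarrow> deg_less (\<lambda>k. (c::'a::mult_zero) * p k) N"
  unfolding deg_less_def by auto

lemma finsupp_add:
  "finsupp (p::nat \<Rightarrow> 'a::monoid_add) \<Longrightarrow> finsupp q \<Longrightarrow> finsupp (\<lambda>k. p k + q k)"
  by (metis obtain_common_deg_bound deg_less_add finsupp_if_deg_less)

lemma finsupp_diff:
  "finsupp (p::nat \<Rightarrow> 'a::group_add) \<Longrightarrow> finsupp q \<Longrightarrow> finsupp (\<lambda>k. p k - q k)"
  by (metis obtain_common_deg_bound deg_less_diff finsupp_if_deg_less)

lemma finsupp_mult_left: "finsupp p \<Longrightarrow> finsupp (\<lambda>k. (c::'a::mult_zero) * p k)"
  using deg_less_mult_left finsupp_iff_deg_less by metis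

lemma deg_less_zero: "deg_less (\<lambda>k. 0) N"
  unfolding deg_less_def by auto

lemma deg_less_sconst: "deg_less (sconst a) (Suc 0)"
  unfolding deg_less_def sconst_def by auto

lemma deg_less_one_iff_sconst: "deg_less p (Suc 0) \<longleftrightarrow> p \<in> range sconst"
proof
  assume "deg_less p (Suc 0)"
  then have "p = sconst (p 0)" unfolding deg_less_def sconst_def by (auto simp: fun_eq_iff)
  then show "p \<in> range sconst" by (metis rangeI)
qed (auto simp: deg_less_sconst)

lemma deg_less_smonom: "deg_less (smonom j) (Suc j)"
  unfolding deg_less_def smonom_def by auto

section \<open>Multiplication in \<open>D[t; \<sigma>, \<delta>]\<close>\<close>

locale skew_poly =
  fixes \<sigma> \<delta> :: "'a::ring_1 \<Rightarrow> 'a"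
  assumes endo: "ring_endo \<sigma>" and der: "left_sigma_derivation \<sigma> \<delta>"
begin

abbreviation T where "T \<equiv> tmul \<sigma> \<delta>"
abbreviation mul where "mul \<equiv> skmult \<sigma> \<delta>"

lemma sigma_add: "\<sigma> (a + b) = \<sigma> a + \<sigma> b" using endo unfolding ring_endo_def by blast
lemma sigma_mult: "\<sigma> (a * b) = \<sigma> a * \<sigma> b" using endo unfolding ring_endo_def by blast
lemma sigma_one[simp]: "\<sigma> 1 = 1" using endo unfolding ring_endo_def by blast
lemma sigma_zero[simp]: "\<sigma> 0 = 0" using sigma_add[of 0 0] by simp
lemma sigma_diff: "\<sigma> (a - b) = \<sigma> a - \<sigma> b"
  by (metis add_diff_cancel diff_add_cancel sigma_add)
lemma sigma_pow_one[simp]: "(\<sigma> ^^ n) 1 = 1" by (induction n) auto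

lemma delta_add: "\<delta> (a + b) = \<delta> a + \<delta> b" using der unfolding left_sigma_derivation_def by blast
lemma delta_mult: "\<delta> (a * b) = \<sigma> a * \<delta> b + \<delta> a * b"
  using der unfolding left_sigma_derivation_def by blast
lemma delta_zero[simp]: "\<delta> 0 = 0" using delta_add[of 0 0] by simp
lemma delta_one[simp]: "\<delta> 1 = 0" using delta_mult[of 1 1] by simp
lemma delta_diff: "\<delta> (a - b) = \<delta> a - \<delta> b"
  by (metis add_diff_cancel diff_add_cancel delta_add)

lemma tmul_add: "T (\<lambda>k. p k + q k) = (\<lambda>k. T p k + T q k)"
  unfolding tmul_def by (auto simp: sigma_add delta_add algebra_simps)
lemma tmul_diff: "T (\<lambda>k. p k - q k) = (\<lambda>k. T p k - T q k)"
  unfolding tmul_def by (auto simp: sigma_diff delta_diff algebra_simps)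
lemma tmul_zero: "T (\<lambda>k. 0) = (\<lambda>k. 0)"
  unfolding tmul_def by auto
lemma tmul_mult_left: "T (\<lambda>k. c * q k) = (\<lambda>k. \<sigma> c * T q k + \<delta> c * q k)"
  unfolding tmul_def by (auto simp: sigma_mult delta_mult algebra_simps)

lemma tmul_pow_diff: "(T ^^ n) (\<lambda>k. p k - q k) = (\<lambda>k. (T ^^ n) p k - (T ^^ n) q k)"
  by (induction n) (auto simp: tmul_diff)

lemma tmul_sum: "finite A \<Longrightarrow> T (\<lambda>k. \<Sum>i\<in>A. F i k) = (\<lambda>k. \<Sum>i\<in>A. T (F i) k)"
  by (induction A rule: finite_induct) (simp_all add: tmul_zero tmul_add)

lemma tmul_smonom: "T (smonom j) = smonom (Suc j)"
  unfolding tmul_def smonom_def by (auto simp: fun_eq_iff)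
lemma tmul_pow_smonom: "(T ^^ i) (smonom j) = smonom (j + i)"
  by (induction i) (auto simp: tmul_smonom)

lemma deg_less_tmul: "deg_less q N \<Longrightarrow> deg_less (T q) (Suc N)"
  unfolding deg_less_def tmul_def by auto
lemma deg_less_tmul_pow: "deg_less q N \<Longrightarrow> deg_less ((T ^^ n) q) (N + n)"
  by (induction n) (auto dest: deg_less_tmul)
lemma finsupp_tmul_pow: "finsupp q \<Longrightarrow> finsupp ((T ^^ n) q)"
  using deg_less_tmul_pow finsupp_iff_deg_less by blast

lemma tmul_pow_top_coeff: "deg_less q (Suc M) \<Longrightarrow> (T ^^ n) q (M + n) = (\<sigma> ^^ n) (q M)"
proof (induction n)
  case (Suc n)
  have "deg_less ((T ^^ n) q) (Suc (M + n))" using deg_less_tmul_pow[OF Suc.prems, of n] by simp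
  then show ?case using Suc unfolding tmul_def deg_less_def by simp
qed simp

lemma skmult_eq_sum: "deg_less p N \<Longrightarrow> mul p q k = (\<Sum>i<N. p i * (T ^^ i) q k)"
  unfolding skmult_def by (rule sum.mono_neutral_left) (auto simp: deg_less_def not_less[symmetric])

lemma skmult_eq_sum': "deg_less p N \<Longrightarrow> mul p q = (\<lambda>k. \<Sum>i<N. p i * (T ^^ i) q k)"
  using skmult_eq_sum by blast

lemma deg_less_skmult:
  assumes "deg_less p N" "deg_less q (Suc M)"
  shows "deg_less (mul p q) (N + M)"
  unfolding deg_less_def
proof (intro allI impI)
  fix k assume k: "N + M \<le> k"
  have "(T ^^ i) q k = 0" if "i < N" for i
    using deg_less_tmul_pow[OF assms(2), of i] k that deg_lessD by fastforce
  then show "mul p q k = 0" using skmult_eq_sum[OF assms(1)] by simp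
qed

lemma finsupp_skmult: "finsupp p \<Longrightarrow> finsupp q \<Longrightarrow> finsupp (mul p q)"
  by (meson deg_less_mono deg_less_skmult finsupp_iff_deg_less le_SucI order_refl)

lemma skmult_add_left:
  assumes "finsupp p1" "finsupp p2"
  shows "mul (\<lambda>i. p1 i + p2 i) q = (\<lambda>k. mul p1 q k + mul p2 q k)"
proof -
  obtain N where "deg_less p1 N" "deg_less p2 N" using assms obtain_common_deg_bound by blast
  moreover from this have "deg_less (\<lambda>i. p1 i + p2 i) N" by (rule deg_less_add)
  ultimately show ?thesis by (simp add: skmult_eq_sum' sum.distrib distrib_right)
qed

lemma skmult_diff_left:
  assumes "finsupp p1" "finsupp p2"
  shows "mul (\<lambda>i. p1 i - p2 i) q = (\<lambda>k. mul p1 q k - mul p2 q k)"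
proof -
  obtain N where "deg_less p1 N" "deg_less p2 N" using assms obtain_common_deg_bound by blast
  moreover from this have "deg_less (\<lambda>i. p1 i - p2 i) N" by (rule deg_less_diff)
  ultimately show ?thesis by (simp add: skmult_eq_sum' sum_subtractf left_diff_distrib)
qed

lemma skmult_mult_left:
  assumes "finsupp p"
  shows "mul (\<lambda>i. c * p i) q = (\<lambda>k. c * mul p q k)"
proof -
  obtain N where "deg_less p N" using assms finsupp_iff_deg_less by blast
  moreover from this have "deg_less (\<lambda>i. c * p i) N" by (rule deg_less_mult_left)
  ultimately show ?thesis by (simp add: skmult_eq_sum' sum_distrib_left mult.assoc)
qed

lemma skmult_diff_right: "mul p (\<lambda>k. q1 k - q2 k) = (\<lambda>k. mul p q1 k - mul p q2 k)"
  unfolding skmult_def by (simp add: tmul_pow_diff sum_subtractf right_diff_distrib)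

lemma skmult_zero_left: "mul (\<lambda>k. 0) q = (\<lambda>k. 0)"
  unfolding skmult_def by simp

lemma skmult_sconst_left: "mul (sconst c) q = (\<lambda>k. c * q k)"
  using skmult_eq_sum'[OF deg_less_sconst, of c q] by (simp add: sconst_def)

lemma skmult_smonom_left: "mul (smonom j) q = (T ^^ j) q"
  using skmult_eq_sum'[OF deg_less_smonom, of j q]
  by (simp add: smonom_def if_distrib cong: if_cong)

text \<open>The product lets \<open>t\<close> act on the right factor, so associativity reduces to
  \<open>t (p q) = (t p) q\<close>.\<close>

lemma tmul_skmult:
  assumes "finsupp p"
  shows "T (mul p q) = mul (T p) q"
proof -
  obtain N where N: "deg_less p N" using assms finsupp_iff_deg_less by blast
  have "T (mul p q) = (\<lambda>k. \<Sum>i<N. \<sigma> (p i) * (T ^^ Suc i) q k + \<delta> (p i) * (T ^^ i) q k)"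
    using skmult_eq_sum'[OF N, of q] tmul_sum[of "{..<N}"] by (simp add: tmul_mult_left)
  also have "\<dots> = (\<lambda>k. \<Sum>i<Suc N. T p i * (T ^^ i) q k)"
  proof
    fix k
    have "(\<Sum>i<Suc N. T p i * (T ^^ i) q k) =
      (\<Sum>i<Suc N. (if i = 0 then 0 else \<sigma> (p (i - 1))) * (T ^^ i) q k) +
      (\<Sum>i<Suc N. \<delta> (p i) * (T ^^ i) q k)"
      unfolding tmul_def by (simp add: distrib_right sum.distrib)
    also have "(\<Sum>i<Suc N. (if i = 0 then 0 else \<sigma> (p (i - 1))) * (T ^^ i) q k) =
      (\<Sum>i<N. \<sigma> (p i) * (T ^^ Suc i) q k)"
      by (subst sum.lessThan_Suc_shift) simp
    also have "(\<Sum>i<Suc N. \<delta> (p i) * (T ^^ i) q k) = (\<Sum>i<N. \<delta> (p i) * (T ^^ i) q k)"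
      using deg_lessD[OF N] by simp
    finally show "(\<Sum>i<N. \<sigma> (p i) * (T ^^ Suc i) q k + \<delta> (p i) * (T ^^ i) q k) =
      (\<Sum>i<Suc N. T p i * (T ^^ i) q k)"
      by (simp add: sum.distrib)
  qed
  also have "\<dots> = mul (T p) q" using skmult_eq_sum'[OF deg_less_tmul[OF N]] by simp
  finally show ?thesis .
qed

lemma tmul_pow_skmult: "finsupp p \<Longrightarrow> (T ^^ n) (mul p q) = mul ((T ^^ n) p) q"
  by (induction n) (simp_all add: tmul_skmult finsupp_tmul_pow)

lemma skmult_assoc:
  assumes "finsupp p" "finsupp q"
  shows "mul (mul p q) r = mul p (mul q r)"
proof
  fix k
  obtain N M where N: "deg_less p N" and M: "deg_less q M" using assms finsupp_iff_deg_less by blast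
  have PQ: "deg_less (mul p q) (N + M)" using deg_less_skmult[OF N deg_less_mono[OF M]] by simp
  have Qi: "deg_less ((T ^^ i) q) (N + M)" if "i < N" for i
    using deg_less_tmul_pow[OF M, of i] that deg_less_mono by fastforce
  have "mul (mul p q) r k = (\<Sum>j<N+M. (\<Sum>i<N. p i * (T ^^ i) q j) * (T ^^ j) r k)"
    using skmult_eq_sum[OF PQ] skmult_eq_sum[OF N] by simp
  also have "\<dots> = (\<Sum>i<N. p i * (\<Sum>j<N+M. (T ^^ i) q j * (T ^^ j) r k))"
    by (simp add: sum_distrib_left sum_distrib_right mult.assoc sum.swap[of _ "{..<N}"])
  also have "\<dots> = (\<Sum>i<N. p i * mul ((T ^^ i) q) r k)"
    using skmult_eq_sum[OF Qi] by simp
  also have "\<dots> = (\<Sum>i<N. p i * (T ^^ i) (mul q r) k)"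
    using tmul_pow_skmult[OF assms(2)] by simp
  also have "\<dots> = mul p (mul q r) k" using skmult_eq_sum[OF N] by simp
  finally show "mul (mul p q) r k = mul p (mul q r) k" .
qed

lemma skmult_lead_coeff:
  assumes g: "deg_less g (Suc M)" "g M = 1" and Q: "deg_less Q (Suc d)"
  shows "mul Q g (d + M) = Q d"
proof -
  have "(T ^^ i) g (d + M) = 0" if "i < d" for i
    using deg_less_tmul_pow[OF g(1), of i] that deg_lessD by fastforce
  moreover have "(T ^^ d) g (d + M) = 1"
    using tmul_pow_top_coeff[OF g(1), of d] g(2) by (simp add: add.commute)
  ultimately show ?thesis using skmult_eq_sum[OF Q] by simp
qed

end

section \<open>Right division by a monic polynomial\<close>

locale monic_divisor = skew_poly +
  fixes f :: "nat \<Rightarrow> 'a" and m :: nat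
  assumes monic: "monic_deg f m"
begin

abbreviation rm where "rm \<equiv> rmod \<sigma> \<delta> f m"
abbreviation pm where "pm \<equiv> pmult \<sigma> \<delta> f m"

definition eigenring :: "(nat \<Rightarrow> 'a) set" where
  "eigenring = {z \<in> petit_carrier m. rm (mul f z) = (\<lambda>k. 0)}"

lemma f_lead_coeff: "f m = 1" using monic unfolding monic_deg_def by blast
lemma deg_less_f: "deg_less f (Suc m)" using monic unfolding monic_deg_def deg_less_def by auto
lemma finsupp_f: "finsupp f" using deg_less_f finsupp_if_deg_less by blast

lemma petit_carrier_iff: "x \<in> petit_carrier m \<longleftrightarrow> deg_less x m"
  unfolding petit_carrier_def by simp

lemma deg_less_quotient:
  assumes "finsupp Q" and "deg_less (mul Q f) (m + M)"
  shows "deg_less Q M"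
proof (rule ccontr)
  assume "\<not> deg_less Q M"
  then obtain d where d: "M \<le> d" "Q d \<noteq> 0" "deg_less Q (Suc d)"
    using obtain_degree assms(1) by blast
  then have "mul Q f (d + m) = Q d" using skmult_lead_coeff[OF deg_less_f f_lead_coeff] by blast
  moreover have "mul Q f (d + m) = 0" using assms(2) deg_lessD d(1) by fastforce
  ultimately show False using d(2) by simp
qed

lemma deg_less_sub_lead_multiple:
  assumes "deg_less g (Suc m)"
  shows "deg_less (\<lambda>k. g k - g m * f k) m"
  unfolding deg_less_def
proof (intro allI impI)
  fix k assume "m \<le> k"
  then consider "k = m" | "Suc m \<le> k" by linarith
  then show "g k - g m * f k = 0"
    by cases (simp_all add: f_lead_coeff deg_lessD[OF assms] deg_lessD[OF deg_less_f])
qed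

lemma right_division_exists:
  assumes "finsupp g"
  shows "\<exists>q r. finsupp q \<and> deg_less r m \<and> g = (\<lambda>k. mul q f k + r k)"
proof -
  obtain n where "deg_less g (m + n)" using assms finsupp_iff_deg_less deg_less_mono le_add2 by metis
  then show ?thesis
  proof (induction n arbitrary: g)
    case 0
    then show ?case using finsupp_if_deg_less[OF deg_less_zero]
      by (intro exI[of _ "\<lambda>k. 0"] exI[of _ g]) (simp add: skmult_zero_left)
  next
    case (Suc n)
    define h where "h = (\<lambda>k. g (m + n) * smonom n k)"
    have h: "finsupp h"
      unfolding h_def using deg_less_smonom finsupp_if_deg_less finsupp_mult_left by blast
    have hf: "mul h f = (\<lambda>k. g (m + n) * (T ^^ n) f k)" unfolding h_def
      using skmult_mult_left[OF finsupp_if_deg_less[OF deg_less_smonom]] skmult_smonom_left by simp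
    have "deg_less (\<lambda>k. g k - mul h f k) (m + n)" unfolding deg_less_def
    proof (intro allI impI)
      fix k assume k: "m + n \<le> k"
      show "g k - mul h f k = 0"
      proof (cases "k = m + n")
        case True
        then show ?thesis using tmul_pow_top_coeff[OF deg_less_f, of n] f_lead_coeff hf by simp
      next
        case False
        then have "g k = 0" "(T ^^ n) f k = 0"
          using k Suc.prems deg_less_tmul_pow[OF deg_less_f, of n] deg_lessD by fastforce+
        then show ?thesis using hf by simp
      qed
    qed
    then obtain q r where qr: "finsupp q" "deg_less r m" "(\<lambda>k. g k - mul h f k) = (\<lambda>k. mul q f k + r k)"
      using Suc.IH by blast
    have "g = (\<lambda>k. mul (\<lambda>i. q i + h i) f k + r k)"
      using qr(3) unfolding skmult_add_left[OF qr(1) h]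
      by (auto simp: fun_eq_iff algebra_simps dest: fun_cong)
    then show ?case using finsupp_add[OF qr(1) h] qr(2) by blast
  qed
qed

lemma rmod_eqI:
  assumes r: "deg_less r m" and q: "finsupp q" and g: "g = (\<lambda>k. mul q f k + r k)"
  shows "rm g = r"
  unfolding rmod_def
proof (rule the_equality)
  show "deg_less r m \<and> (\<exists>q. finsupp q \<and> g = (\<lambda>k. mul q f k + r k))" using r q g by blast
next
  fix r' assume "deg_less r' m \<and> (\<exists>q. finsupp q \<and> g = (\<lambda>k. mul q f k + r' k))"
  then obtain q' where r': "deg_less r' m" and q': "finsupp q'" and g': "g = (\<lambda>k. mul q' f k + r' k)"
    by blast
  have "mul (\<lambda>i. q i - q' i) f = (\<lambda>k. r' k - r k)"
    unfolding skmult_diff_left[OF q q'] using g g' by (auto simp: fun_eq_iff algebra_simps dest: fun_cong)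
  then have "deg_less (\<lambda>i. q i - q' i) 0"
    using deg_less_quotient[OF finsupp_diff[OF q q']] deg_less_diff[OF r' r] by simp
  then have "q = q'" unfolding deg_less_def by (auto simp: fun_eq_iff)
  then show "r' = r" using g g' by (metis add_left_cancel ext)
qed

lemma rmod_decomp:
  assumes "finsupp g"
  shows "deg_less (rm g) m" "\<exists>q. finsupp q \<and> g = (\<lambda>k. mul q f k + rm g k)"
proof -
  obtain q r where qr: "finsupp q" "deg_less r m" "g = (\<lambda>k. mul q f k + r k)"
    using right_division_exists[OF assms] by blast
  then have "rm g = r" using rmod_eqI by blast
  then show "deg_less (rm g) m" "\<exists>q. finsupp q \<and> g = (\<lambda>k. mul q f k + rm g k)" using qr by auto
qed

lemma rmod_multiple: "finsupp q \<Longrightarrow> rm (mul q f) = (\<lambda>k. 0)"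
  by (rule rmod_eqI[OF deg_less_zero]) auto

lemma rmod_zero: "rm (\<lambda>k. 0) = (\<lambda>k. 0)"
  by (rule rmod_eqI[OF deg_less_zero finsupp_if_deg_less[OF deg_less_zero]]) (simp add: skmult_zero_left)

lemma rmod_eq_zero_iff:
  assumes "finsupp g"
  shows "rm g = (\<lambda>k. 0) \<longleftrightarrow> (\<exists>q. finsupp q \<and> g = mul q f)"
  using rmod_decomp(2)[OF assms] rmod_multiple by fastforce

lemma rmod_diff:
  assumes "finsupp g1" "finsupp g2"
  shows "rm (\<lambda>k. g1 k - g2 k) = (\<lambda>k. rm g1 k - rm g2 k)"
proof -
  obtain q1 where q1: "finsupp q1" "g1 = (\<lambda>k. mul q1 f k + rm g1 k)"
    using rmod_decomp(2)[OF assms(1)] by blast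
  obtain q2 where q2: "finsupp q2" "g2 = (\<lambda>k. mul q2 f k + rm g2 k)"
    using rmod_decomp(2)[OF assms(2)] by blast
  have "(\<lambda>k. g1 k - g2 k) = (\<lambda>k. mul (\<lambda>i. q1 i - q2 i) f k + (rm g1 k - rm g2 k))"
    unfolding skmult_diff_left[OF q1(1) q2(1)]
    by (simp add: fun_cong[OF q1(2)] fun_cong[OF q2(2)] algebra_simps)
  then show ?thesis
    by (rule rmod_eqI[OF deg_less_diff[OF rmod_decomp(1)[OF assms(1)] rmod_decomp(1)[OF assms(2)]]
          finsupp_diff[OF q1(1) q2(1)]])
qed

lemma rmod_mult_left:
  assumes "finsupp g"
  shows "rm (\<lambda>k. c * g k) = (\<lambda>k. c * rm g k)"
proof -
  obtain q where q: "finsupp q" "g = (\<lambda>k. mul q f k + rm g k)" using rmod_decomp(2)[OF assms] by blast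
  have "(\<lambda>k. c * g k) = (\<lambda>k. mul (\<lambda>i. c * q i) f k + c * rm g k)"
    unfolding skmult_mult_left[OF q(1)] by (simp add: fun_cong[OF q(2)] algebra_simps)
  then show ?thesis
    by (rule rmod_eqI[OF deg_less_mult_left[OF rmod_decomp(1)[OF assms]] finsupp_mult_left[OF q(1)]])
qed

section \<open>Associators and nuclei of the Petit algebra\<close>

lemma obtain_petit_quotient:
  assumes "deg_less x m" "deg_less y m"
  obtains Q where "finsupp Q" "mul x y = (\<lambda>k. mul Q f k + pm x y k)"
  using rmod_decomp(2)[OF finsupp_skmult[OF finsupp_if_deg_less finsupp_if_deg_less]] assms
  unfolding pmult_def by metis

lemma passoc_eq:
  assumes x: "deg_less x m" and y: "deg_less y m" and z: "deg_less z m"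
    and Q: "finsupp Q" and xy: "mul x y = (\<lambda>k. mul Q f k + pm x y k)"
  shows "passoc \<sigma> \<delta> f m x y z = (\<lambda>k. - rm (mul Q (mul f z)) k)"
proof -
  have xf: "finsupp x" and yf: "finsupp y" and zf: "finsupp z" using x y z finsupp_if_deg_less by blast+
  have A: "finsupp (mul x (mul y z))" and B: "finsupp (mul Q (mul f z))"
    using finsupp_skmult xf yf zf Q finsupp_f by blast+
  have "pm x y = (\<lambda>k. mul x y k - mul Q f k)" using xy by (auto simp: fun_eq_iff dest: fun_cong)
  then have "mul (pm x y) z = (\<lambda>k. mul x (mul y z) k - mul Q (mul f z) k)"
    using skmult_diff_left finsupp_skmult xf yf Q finsupp_f skmult_assoc by simp
  then have L: "pm (pm x y) z = (\<lambda>k. rm (mul x (mul y z)) k - rm (mul Q (mul f z)) k)"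
    unfolding pmult_def using rmod_diff[OF A B] by simp
  obtain Q' where Q': "finsupp Q'" "mul y z = (\<lambda>k. mul Q' f k + pm y z k)"
    using obtain_petit_quotient y z by blast
  have "pm y z = (\<lambda>k. mul y z k - mul Q' f k)" using Q'(2) by (auto simp: fun_eq_iff dest: fun_cong)
  then have "mul x (pm y z) = (\<lambda>k. mul x (mul y z) k - mul (mul x Q') f k)"
    using skmult_diff_right skmult_assoc[OF xf Q'(1)] by simp
  then have R: "pm x (pm y z) = rm (mul x (mul y z))"
    unfolding pmult_def using rmod_diff[OF A] rmod_multiple finsupp_skmult xf Q'(1) finsupp_f by simp
  show ?thesis unfolding passoc_def L R by simp
qed

lemma passoc_eq_zero_if_deg_less:
  assumes "deg_less x m" "deg_less y m" "deg_less z m" and "deg_less (mul x y) m"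
  shows "passoc \<sigma> \<delta> f m x y z = (\<lambda>k. 0)"
proof -
  have "pm x y = mul x y"
    unfolding pmult_def using rmod_eqI[OF assms(4) finsupp_if_deg_less[OF deg_less_zero]]
    by (simp add: skmult_zero_left)
  then have "mul x y = (\<lambda>k. mul (\<lambda>k. 0) f k + pm x y k)" by (simp add: skmult_zero_left)
  from passoc_eq[OF assms(1-3) finsupp_if_deg_less[OF deg_less_zero] this]
  show ?thesis by (simp add: skmult_zero_left rmod_zero)
qed

lemma sconst_in_petit_carrier: "1 \<le> m \<Longrightarrow> sconst a \<in> petit_carrier m"
  unfolding petit_carrier_iff by (rule deg_less_mono[OF deg_less_sconst]) simp

lemma sconst_in_nuc_l:
  assumes "1 \<le> m"
  shows "range sconst \<subseteq> nuc_l \<sigma> \<delta> f m"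
proof -
  have "passoc \<sigma> \<delta> f m (sconst a) y z = (\<lambda>k. 0)" if y: "deg_less y m" and z: "deg_less z m" for a y z
  proof (rule passoc_eq_zero_if_deg_less[OF _ y z])
    show "deg_less (sconst a) m" using sconst_in_petit_carrier[OF assms] petit_carrier_iff by blast
    have "deg_less y (Suc (m - 1))" using y assms by simp
    from deg_less_skmult[OF deg_less_sconst this] show "deg_less (mul (sconst a) y) m"
      using assms by simp
  qed
  then show ?thesis
    unfolding nuc_l_def using sconst_in_petit_carrier[OF assms] by (auto simp: petit_carrier_iff)
qed

lemma sconst_in_nuc_m:
  assumes "1 \<le> m"
  shows "range sconst \<subseteq> nuc_m \<sigma> \<delta> f m"
proof -
  have "passoc \<sigma> \<delta> f m y (sconst a) z = (\<lambda>k. 0)" if y: "deg_less y m" and z: "deg_less z m" for a y z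
  proof (rule passoc_eq_zero_if_deg_less[OF y _ z])
    show "deg_less (sconst a) m" using sconst_in_petit_carrier[OF assms] petit_carrier_iff by blast
    show "deg_less (mul y (sconst a)) m" using deg_less_skmult[OF y deg_less_sconst] by simp
  qed
  then show ?thesis
    unfolding nuc_m_def using sconst_in_petit_carrier[OF assms] by (auto simp: petit_carrier_iff)
qed

lemma eigenring_subset_nuc_r: "eigenring \<subseteq> nuc_r \<sigma> \<delta> f m"
proof
  fix z assume "z \<in> eigenring"
  then have z: "deg_less z m" and "rm (mul f z) = (\<lambda>k. 0)"
    unfolding eigenring_def petit_carrier_iff by auto
  then obtain P where P: "finsupp P" "mul f z = mul P f"
    using rmod_eq_zero_iff finsupp_skmult[OF finsupp_f finsupp_if_deg_less] by blast
  have "passoc \<sigma> \<delta> f m x y z = (\<lambda>k. 0)" if x: "deg_less x m" and y: "deg_less y m" for x y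
  proof -
    obtain Q where Q: "finsupp Q" "mul x y = (\<lambda>k. mul Q f k + pm x y k)"
      using obtain_petit_quotient[OF x y] by blast
    have "mul Q (mul f z) = mul (mul Q P) f" using P skmult_assoc[OF Q(1) P(1)] by simp
    then show ?thesis using passoc_eq[OF x y z Q] rmod_multiple finsupp_skmult[OF Q(1) P(1)] by simp
  qed
  then show "z \<in> nuc_r \<sigma> \<delta> f m" unfolding nuc_r_def using z by (auto simp: petit_carrier_iff)
qed

lemma nuc_r_subset_eigenring:
  assumes "2 \<le> m"
  shows "nuc_r \<sigma> \<delta> f m \<subseteq> eigenring"
proof
  fix z assume z: "z \<in> nuc_r \<sigma> \<delta> f m"
  then have zm: "deg_less z m" unfolding nuc_r_def petit_carrier_iff by blast
  define x :: "nat \<Rightarrow> 'a" where "x = smonom (m - 1)"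
  define y :: "nat \<Rightarrow> 'a" where "y = smonom 1"
  have x: "deg_less x m" using deg_less_smonom[of "m - 1"] assms unfolding x_def by simp
  have y: "deg_less y m" using deg_less_mono[OF deg_less_smonom, of 1 m] assms unfolding y_def by simp
  have 1: "finsupp (sconst 1)" using finsupp_if_deg_less[OF deg_less_sconst] .
  have "deg_less (\<lambda>k. smonom m k - f k) m"
    using deg_less_sub_lead_multiple[OF deg_less_smonom[of m]] by (simp add: smonom_def)
  moreover have xy: "mul x y = (\<lambda>k. mul (sconst 1) f k + (smonom m k - f k))"
    using assms unfolding x_def y_def by (simp add: skmult_smonom_left tmul_pow_smonom skmult_sconst_left)
  ultimately have "pm x y = (\<lambda>k. smonom m k - f k)"
    unfolding pmult_def using rmod_eqI 1 by blast
  with xy have "mul x y = (\<lambda>k. mul (sconst 1) f k + pm x y k)" by simp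
  from passoc_eq[OF x y zm 1 this]
  have "passoc \<sigma> \<delta> f m x y z = (\<lambda>k. - rm (mul f z) k)" by (simp add: skmult_sconst_left)
  moreover have "passoc \<sigma> \<delta> f m x y z = (\<lambda>k. 0)"
    using z x y unfolding nuc_r_def by (auto simp: petit_carrier_iff)
  ultimately show "z \<in> eigenring"
    unfolding eigenring_def petit_carrier_iff using zm by (auto simp: fun_eq_iff dest: fun_cong)
qed

lemma nuc_r_eq_eigenring: "2 \<le> m \<Longrightarrow> nuc_r \<sigma> \<delta> f m = eigenring"
  using nuc_r_subset_eigenring eigenring_subset_nuc_r by blast

lemma right_semi_invariant_iff_rmod:
  "right_semi_invariant \<sigma> \<delta> f \<longleftrightarrow> (\<forall>a. rm (mul f (sconst a)) = (\<lambda>k. 0))"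
proof -
  have "(\<exists>b. mul f (sconst a) = mul (sconst b) f) \<longleftrightarrow> rm (mul f (sconst a)) = (\<lambda>k. 0)" for a
  proof -
    have fa: "finsupp (mul f (sconst a))"
      using finsupp_skmult[OF finsupp_f finsupp_if_deg_less[OF deg_less_sconst]] .
    have "deg_less Q (Suc 0)" if "finsupp Q" "mul f (sconst a) = mul Q f" for Q
      using deg_less_quotient[OF that(1), of 1] deg_less_skmult[OF deg_less_f deg_less_sconst, of a] that(2)
      by simp
    then show ?thesis
      unfolding rmod_eq_zero_iff[OF fa] deg_less_one_iff_sconst
      using finsupp_if_deg_less[OF deg_less_sconst] by blast
  qed
  then show ?thesis unfolding right_semi_invariant_def by blast
qed

lemma nuc_l_lead_coeff_annihilates_rmod:
  assumes x: "x \<in> nuc_l \<sigma> \<delta> f m" and d: "0 < d" "deg_less x (Suc d)" and z: "deg_less z m"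
  shows "x d * rm (mul f z) k = 0"
proof -
  have xm: "deg_less x m" using x unfolding nuc_l_def petit_carrier_iff by blast
  show ?thesis
  proof (cases "d < m")
    case True
    define y :: "nat \<Rightarrow> 'a" where "y = smonom (m - d)"
    have ym: "deg_less y m"
      unfolding y_def by (rule deg_less_mono[OF deg_less_smonom]) (use d(1) True in linarith)
    have "smonom (m - d) (m - d) = (1::'a)" by (simp add: smonom_def)
    from skmult_lead_coeff[OF deg_less_smonom this d(2)] have "mul x y m = x d"
      using True unfolding y_def by simp
    moreover have "deg_less (mul x y) (Suc m)"
      using deg_less_skmult[OF d(2) deg_less_smonom[of "m - d"]] True unfolding y_def by simp
    ultimately have r: "deg_less (\<lambda>k. mul x y k - x d * f k) m"
      using deg_less_sub_lead_multiple by metis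
    have fin: "finsupp (sconst (x d))" using finsupp_if_deg_less[OF deg_less_sconst] .
    have xy: "mul x y = (\<lambda>k. mul (sconst (x d)) f k + (mul x y k - x d * f k))"
      by (simp add: skmult_sconst_left)
    then have "pm x y = (\<lambda>k. mul x y k - x d * f k)"
      unfolding pmult_def using rmod_eqI[OF r fin] by blast
    with xy have "mul x y = (\<lambda>k. mul (sconst (x d)) f k + pm x y k)" by simp
    from passoc_eq[OF xm ym z fin this]
    have "passoc \<sigma> \<delta> f m x y z = (\<lambda>k. - (x d * rm (mul f z) k))"
      using rmod_mult_left[OF finsupp_skmult[OF finsupp_f finsupp_if_deg_less[OF z]]]
      by (simp add: skmult_sconst_left)
    moreover have "passoc \<sigma> \<delta> f m x y z = (\<lambda>k. 0)"
      using x ym z unfolding nuc_l_def by (auto simp: petit_carrier_iff)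
    ultimately show ?thesis by (auto simp: fun_eq_iff dest: fun_cong)
  next
    case False
    then show ?thesis using deg_lessD[OF xm, of d] by simp
  qed
qed

end

lemma petit_associative_if_nonconst_in_nuc_l:
  fixes \<sigma> \<delta> :: "'a::division_ring \<Rightarrow> 'a"
  assumes "monic_divisor \<sigma> \<delta> f m" and x: "x \<in> nuc_l \<sigma> \<delta> f m" "x \<notin> range sconst"
  shows "petit_associative \<sigma> \<delta> f m"
proof -
  interpret monic_divisor \<sigma> \<delta> f m by fact
  have "finsupp x" using x finsupp_if_deg_less unfolding nuc_l_def petit_carrier_iff by blast
  then obtain d where d: "Suc 0 \<le> d" "x d \<noteq> 0" "deg_less x (Suc d)"
    using obtain_degree x(2) deg_less_one_iff_sconst by blast
  have "rm (mul f z) = (\<lambda>k. 0)" if z: "deg_less z m" for z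
  proof
    fix k
    show "rm (mul f z) k = 0"
      using nuc_l_lead_coeff_annihilates_rmod[OF x(1) _ d(3) z, of k] d(1,2) by simp
  qed
  then have "petit_carrier m \<subseteq> nuc_r \<sigma> \<delta> f m"
    using eigenring_subset_nuc_r unfolding eigenring_def petit_carrier_def by blast
  then show ?thesis unfolding petit_associative_def nuc_r_def by blast
qed

theorem mainTheorem1:
  fixes \<sigma> \<delta> :: "'a::division_ring \<Rightarrow> 'a" and f :: "nat \<Rightarrow> 'a" and m :: nat
  assumes "ring_endo \<sigma>" and "left_sigma_derivation \<sigma> \<delta>"
    and "monic_deg f m" and "m \<ge> 2"
  shows "(right_semi_invariant \<sigma> \<delta> f \<longleftrightarrow> range sconst \<subseteq> nuc_r \<sigma> \<delta> f m) \<and>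
         (right_semi_invariant \<sigma> \<delta> f \<longrightarrow>
            nuc \<sigma> \<delta> f m = range sconst \<or> petit_associative \<sigma> \<delta> f m)"
proof -
  interpret monic_divisor \<sigma> \<delta> f m using assms(1-3) by unfold_locales
  have m1: "1 \<le> m" using \<open>m \<ge> 2\<close> by simp
  have semi_iff: "right_semi_invariant \<sigma> \<delta> f \<longleftrightarrow> range sconst \<subseteq> nuc_r \<sigma> \<delta> f m"
    unfolding right_semi_invariant_iff_rmod nuc_r_eq_eigenring[OF \<open>m \<ge> 2\<close>] eigenring_def
    using sconst_in_petit_carrier[OF m1] by blast
  moreover have "nuc \<sigma> \<delta> f m = range sconst \<or> petit_associative \<sigma> \<delta> f m"
    if "right_semi_invariant \<sigma> \<delta> f"
  proof (rule disjCI)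
    assume "\<not> petit_associative \<sigma> \<delta> f m"
    then have "nuc \<sigma> \<delta> f m \<subseteq> range sconst"
      using petit_associative_if_nonconst_in_nuc_l[OF monic_divisor_axioms] unfolding nuc_def by blast
    moreover have "range sconst \<subseteq> nuc \<sigma> \<delta> f m"
      using sconst_in_nuc_l[OF m1] sconst_in_nuc_m[OF m1] that semi_iff unfolding nuc_def by blast
    ultimately show "nuc \<sigma> \<delta> f m = range sconst" by blast
  qed
  ultimately show ?thesis by blast
qed

end
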